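(* For every integer $r\ge1$, $\mathrm{Var}(\mu^{(r)})\ge\frac b4\lambda(r)$.
   Context: Fix an integer $b\ge2$. For $n\in\mathbb{N}$ with base-$b$ digits $n_k$, $s(n):=\sum_kn_k$. For $r,n\in\mathbb{N}$, $\Delta^{(r)}(n):=s(n+r)-s(n)$, and $\mu^{(r)}(d):=\lim_{N\to\infty}\frac1N|\{n<N:\Delta^{(r)}(n)=d\}|$ for $d\in\mathbb{Z}$; these limits exist and $\mu^{(r)}$ is a probability measure on $\mathbb{Z}$ with finite moments; $\mathrm{Var}(\mu^{(r)})$ is its variance. Blocks: write the expansion of $r\ge1$ as the digit string $r_\ell\cdots r_0$, $r_\ell\neq0$. A block is either a maximal run of consecutive $0$ digits (a block of $0$'s), or a maximal run of consecutive digits equal to $b-1$, or (when $b\ge3$) a single digit with value in $\{1,\dots,b-2\}$. $\lambda(r)$ is the number of blocks of $r$ that are not blocks of $0$'s (non-zero blocks). *)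

theory Defs
  imports "HOL-Analysis.Analysis"
begin

definition digit :: "nat \<Rightarrow> nat \<Rightarrow> nat \<Rightarrow> nat" where
  "digit b n k = n div b ^ k mod b"

text \<open>Base-b digit sum; for b \<ge> 2 all digits at positions k > n vanish since b^k > n.\<close>
definition digsum :: "nat \<Rightarrow> nat \<Rightarrow> int" where
  "digsum b n = int (\<Sum>k\<le>n. digit b n k)"

definition Delta :: "nat \<Rightarrow> nat \<Rightarrow> nat \<Rightarrow> int" where
  "Delta b r n = digsum b (n + r) - digsum b n"

definition mu :: "nat \<Rightarrow> nat \<Rightarrow> int \<Rightarrow> real" where
  "mu b r d = lim (\<lambda>N. real (card {n. n < N \<and> Delta b r n = d}) / real N)"

definition variance_int :: "(int \<Rightarrow> real) \<Rightarrow> real" where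
  "variance_int p = (\<Sum>\<^sub>\<infinity>d. (real_of_int d)^2 * p d) - (\<Sum>\<^sub>\<infinity>d. real_of_int d * p d)^2"

text \<open>lambda(r): number of non-zero blocks of the base-b expansion of r, counted by
  their starting (least significant) positions: a non-zero digit at position k starts a
  new block unless k > 0, it equals b-1 and the digit at position k-1 is also b-1
  (digits in {1..b-2} are singleton blocks; maximal runs of b-1 form one block).\<close>
definition lambda_blocks :: "nat \<Rightarrow> nat \<Rightarrow> nat" where
  "lambda_blocks b r = card {k. digit b r k \<noteq> 0 \<and>
      (k = 0 \<or> digit b r k \<noteq> b - 1 \<or> digit b r (k - 1) \<noteq> b - 1)}"

end

theory Submission
  imports Defs
begin

(* Fix m = b^K > r and write n = t + m q with t < m. If t + r < m then Delta b r n depends on t only;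
   otherwise it equals a value depending on t, plus 1 - (b - 1) J, where J, the number of trailing
   digits b - 1 of q, is geometrically distributed with ratio 1/b on every residue class. Hence mu is an
   explicit mixture; its mean is the average of the low parts, which vanishes, and its variance is
   the mean square low_variance b r K of the low parts plus b r / m. Appending digit K to the low
   part raises low_variance by the average of w (b - w), where w <= b is digit K of r plus the
   incoming carry. A digit of r in {1..b-2} thus raises it by at least b - 1, and a digit b - 1 that
   starts a block above a 0 by at least (b - 1)^2 / b >= b / 4. *)

section \<open>Digit sums\<close>

lemma less_power_self: "(b::nat) \<ge> 2 \<Longrightarrow> n < b ^ n"
  using less_exp[of n] power_mono[of 2 b n] by linarith

lemma digit_eq_0_if_less: "n < b ^ k \<Longrightarrow> digit b n k = 0"
  by (simp add: digit_def)

lemma digsum_eq_sum_lessThan: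
  assumes "b \<ge> 2" "n < b ^ M"
  shows "digsum b n = int (\<Sum>k<M. digit b n k)"
proof -
  have zero: "digit b n k = 0" if "M \<le> k \<or> n < k" for k
  proof (rule digit_eq_0_if_less)
    have "b ^ M \<le> b ^ k" if "M \<le> k" using that assms(1) by (intro power_increasing) auto
    moreover have "n < b ^ k" if "n < k"
      using less_power_self[OF assms(1), of k] that by (meson less_trans less_exp)
    ultimately show "n < b ^ k" using that assms(2) by fastforce
  qed
  have "(\<Sum>k\<le>n. digit b n k) = (\<Sum>k<max M (Suc n). digit b n k)"
    by (rule sum.mono_neutral_left) (use zero in \<open>fastforce simp: not_le\<close>)+
  also have "\<dots> = (\<Sum>k<M. digit b n k)"
    by (rule sum.mono_neutral_right) (use zero in \<open>fastforce simp: not_le\<close>)+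
  finally show ?thesis by (simp add: digsum_def)
qed

lemma digsum_less_base: "b \<ge> 2 \<Longrightarrow> x < b \<Longrightarrow> digsum b x = int x"
  using digsum_eq_sum_lessThan[of b x 1] by (simp add: digit_def)

lemma digsum_mod_div:
  assumes "b \<ge> 2"
  shows "digsum b n = int (n mod b) + digsum b (n div b)"
proof -
  have n: "n < b ^ Suc n"
    using less_power_self[OF assms, of n] assms by (simp add: less_le_trans)
  then have "n div b < b ^ n"
    by (simp add: less_mult_imp_div_less mult.commute)
  have "digsum b n = int (\<Sum>k<Suc n. digit b n k)"
    by (rule digsum_eq_sum_lessThan[OF assms n])
  also have "(\<Sum>k<Suc n. digit b n k) = digit b n 0 + (\<Sum>k<n. digit b n (Suc k))"
    by (rule sum.lessThan_Suc_shift)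
  also have "\<dots> = n mod b + (\<Sum>k<n. digit b (n div b) k)"
    by (simp add: digit_def div_mult2_eq)
  also have "int \<dots> = int (n mod b) + digsum b (n div b)"
    using digsum_eq_sum_lessThan[OF assms \<open>n div b < b ^ n\<close>] by simp
  finally show ?thesis .
qed

lemma digsum_add_mult_power:
  assumes "b \<ge> 2" "x < b ^ K"
  shows "digsum b (x + b ^ K * q) = digsum b x + digsum b q"
  using assms(2)
proof (induction K arbitrary: x)
  case 0
  then show ?case by (simp add: digsum_def digit_def)
next
  case (Suc K)
  have "x div b < b ^ K"
    using Suc.prems assms(1) by (simp add: div_less_iff_less_mult mult.commute)
  then have "digsum b (x div b + b ^ K * q) = digsum b (x div b) + digsum b q"
    by (rule Suc.IH)
  moreover have "(x + b ^ Suc K * q) mod b = x mod b" "(x + b ^ Suc K * q) div b = x div b + b ^ K * q"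
    using assms(1) by (simp_all add: mult.assoc)
  ultimately show ?case
    using digsum_mod_div[OF assms(1), of "x + b ^ Suc K * q"] digsum_mod_div[OF assms(1), of x]
    by simp
qed

section \<open>Carries\<close>

lemma div_less_if_mod_eq_pred: "(b::nat) \<ge> 2 \<Longrightarrow> q mod b = b - 1 \<Longrightarrow> q div b < q"
  by (cases "q = 0") (auto intro: div_less_dividend)

(* carry_count b q is the number of trailing digits b - 1 of q, i.e. the number of carries in q + 1. *)
function carry_count :: "nat \<Rightarrow> nat \<Rightarrow> nat" where
  "carry_count b q = (if 2 \<le> b \<and> q mod b = b - 1 then Suc (carry_count b (q div b)) else 0)"
  by auto
termination
proof (relation "Wellfounded.measure snd")
  fix b q :: nat
  assume "2 \<le> b \<and> q mod b = b - 1"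
  then show "((b, q div b), b, q) \<in> Wellfounded.measure snd"
    using div_less_if_mod_eq_pred by simp
qed auto

declare carry_count.simps [simp del]

lemma dvd_Suc_iff_mod_eq: "(m::nat) > 0 \<Longrightarrow> m dvd Suc q \<longleftrightarrow> q mod m = m - 1"
  by (simp add: dvd_eq_mod_eq_0 mod_Suc) arith

lemma Suc_eq_mult_if_mod_eq:
  assumes "b > 0" "q mod b = b - 1"
  shows "Suc q = b * Suc (q div b)"
  using assms div_mult_mod_eq[of q b] by (simp add: algebra_simps)

lemma digsum_Suc_carry_count:
  assumes "b \<ge> 2"
  shows "digsum b (Suc q) + int (b - 1) * int (carry_count b q) = digsum b q + 1"
proof (induction q rule: less_induct)
  case (less q)
  show ?case
  proof (cases "q mod b = b - 1")
    case True
    then have "digsum b (Suc (q div b)) + int (b - 1) * int (carry_count b (q div b))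
        = digsum b (q div b) + 1"
      using assms by (intro less.IH div_less_if_mod_eq_pred)
    moreover have "digsum b (Suc q) = digsum b (Suc (q div b))"
      using digsum_mod_div[OF assms, of "Suc q"] Suc_eq_mult_if_mod_eq[OF _ True] assms by simp
    moreover have "digsum b q = int (b - 1) + digsum b (q div b)"
      using digsum_mod_div[OF assms, of q] True by simp
    ultimately show ?thesis
      using True assms by (simp add: carry_count.simps algebra_simps)
  next
    case False
    then have "Suc (q mod b) < b"
      using mod_less_divisor[of b q] assms by linarith
    then have "Suc q mod b = Suc (q mod b)" "Suc q div b = q div b"
      by (simp_all add: mod_Suc div_Suc)
    then show ?thesis
      using digsum_mod_div[OF assms, of "Suc q"] digsum_mod_div[OF assms, of q] False
      by (simp add: carry_count.simps)
  qed
qed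

lemma power_dvd_Suc_iff_le_carry_count:
  assumes "b \<ge> 2"
  shows "b ^ j dvd Suc q \<longleftrightarrow> j \<le> carry_count b q"
proof (induction j arbitrary: q)
  case 0
  then show ?case by simp
next
  case (Suc j)
  show ?case
  proof (cases "q mod b = b - 1")
    case True
    have "Suc q = b * Suc (q div b)"
      using Suc_eq_mult_if_mod_eq[OF _ True] assms by simp
    then have "b ^ Suc j dvd Suc q \<longleftrightarrow> b * b ^ j dvd b * Suc (q div b)"
      by (simp only: power_Suc)
    also have "\<dots> \<longleftrightarrow> b ^ j dvd Suc (q div b)"
      using assms by (simp only: nat_mult_dvd_cancel_disj) simp
    finally show ?thesis
      using Suc.IH True assms by (simp add: carry_count.simps)
  next
    case False
    then have "\<not> b dvd Suc q"
      using dvd_Suc_iff_mod_eq[of b q] assms by simp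
    then have "\<not> b ^ Suc j dvd Suc q"
      using dvd_mult_left by auto
    then show ?thesis
      using False by (simp add: carry_count.simps)
  qed
qed

definition Delta_low :: "nat \<Rightarrow> nat \<Rightarrow> nat \<Rightarrow> nat \<Rightarrow> int" where
  "Delta_low b r m t = digsum b ((t + r) mod m) - digsum b t"

lemma Delta_eq_Delta_low_carry:
  assumes b: "b \<ge> 2" and r: "r < b ^ K"
  shows "Delta b r n = Delta_low b r (b ^ K) (n mod b ^ K) +
     (if b ^ K \<le> n mod b ^ K + r then 1 - int (b - 1) * int (carry_count b (n div b ^ K)) else 0)"
proof -
  define m t q where "m = b ^ K" and "t = n mod m" and "q = n div m"
  have "t < m" "n = t + m * q"
    using b by (simp_all add: m_def t_def q_def)
  have digsum_n: "digsum b n = digsum b t + digsum b q"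
    using digsum_add_mult_power[OF b, of t K q] \<open>t < m\<close> \<open>n = t + m * q\<close> m_def by simp
  show ?thesis
  proof (cases "m \<le> t + r")
    case True
    then have "n + r = (t + r - m) + m * Suc q" "t + r - m < m" "(t + r) mod m = t + r - m"
      using \<open>t < m\<close> r \<open>n = t + m * q\<close> m_def le_mod_geq[of m "t + r"] by auto
    then have "digsum b (n + r) = digsum b ((t + r) mod m) + digsum b (Suc q)"
      using digsum_add_mult_power[OF b, of "t + r - m" K "Suc q"] m_def by simp
    then show ?thesis
      using True digsum_n digsum_Suc_carry_count[OF b, of q]
      by (simp add: Delta_def Delta_low_def m_def t_def q_def algebra_simps)
  next
    case False
    have "n + r = (t + r) + m * q"
      using \<open>n = t + m * q\<close> by simp
    then have "digsum b (n + r) = digsum b (t + r) + digsum b q"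
      using digsum_add_mult_power[OF b, of "t + r" K q] False m_def by presburger
    then show ?thesis
      using False digsum_n by (simp add: Delta_def Delta_low_def m_def t_def q_def)
  qed
qed

section \<open>Natural density\<close>

definition has_density :: "nat set \<Rightarrow> real \<Rightarrow> bool" where
  "has_density A \<delta> \<longleftrightarrow> (\<lambda>N. real (card {n. n < N \<and> n \<in> A}) / real N) \<longlonglongrightarrow> \<delta>"

lemma mu_eqI: "has_density {n. Delta b r n = d} \<delta> \<Longrightarrow> mu b r d = \<delta>"
  unfolding has_density_def mu_def by (simp add: limI)

lemma has_density_empty: "has_density {} 0"
  by (simp add: has_density_def)

lemma has_density_Diff:
  assumes "B \<subseteq> A" "has_density A \<alpha>" "has_density B \<beta>"
  shows "has_density (A - B) (\<alpha> - \<beta>)"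
proof -
  have "card {n. n < N \<and> n \<in> A - B} = card {n. n < N \<and> n \<in> A} - card {n. n < N \<and> n \<in> B}" for N
  proof -
    have "{n. n < N \<and> n \<in> A - B} = {n. n < N \<and> n \<in> A} - {n. n < N \<and> n \<in> B}" by blast
    then show ?thesis
      using assms(1) by (simp add: card_Diff_subset subset_iff)
  qed
  moreover have "card {n. n < N \<and> n \<in> B} \<le> card {n. n < N \<and> n \<in> A}" for N
    using assms(1) by (intro card_mono) auto
  ultimately have "real (card {n. n < N \<and> n \<in> A - B}) / real N
      = real (card {n. n < N \<and> n \<in> A}) / real N - real (card {n. n < N \<and> n \<in> B}) / real N" for N
    by (simp add: of_nat_diff diff_divide_distrib)
  then show ?thesis
    using assms(2,3) unfolding has_density_def by (simp add: tendsto_diff)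
qed

lemma has_density_residue_partition:
  assumes "m > 0" "\<And>t. t < m \<Longrightarrow> has_density {n \<in> A. n mod m = t} (\<delta> t)"
  shows "has_density A (\<Sum>t<m. \<delta> t)"
proof -
  have "card {n. n < N \<and> n \<in> A} = (\<Sum>t<m. card {n. n < N \<and> n \<in> {n \<in> A. n mod m = t}})" for N
  proof -
    have "{n. n < N \<and> n \<in> A} = (\<Union>t<m. {n. n < N \<and> n \<in> {n \<in> A. n mod m = t}})"
      using assms(1) by auto
    moreover have "card (\<Union>t<m. {n. n < N \<and> n \<in> {n \<in> A. n mod m = t}})
        = (\<Sum>t<m. card {n. n < N \<and> n \<in> {n \<in> A. n mod m = t}})"
      by (rule card_UN_disjoint) auto
    ultimately show ?thesis by simp
  qed
  then have "real (card {n. n < N \<and> n \<in> A}) / real N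
      = (\<Sum>t<m. real (card {n. n < N \<and> n \<in> {n \<in> A. n mod m = t}}) / real N)" for N
    by (simp add: sum_divide_distrib)
  then show ?thesis
    using tendsto_sum[of "{..<m}", OF assms(2)[unfolded has_density_def]]
    unfolding has_density_def by simp
qed

lemma card_residue_class_lessThan_mult:
  assumes "a < (m::nat)"
  shows "card {n. n < m * k \<and> n mod m = a} = k"
proof -
  have "{n. n < m * k \<and> n mod m = a} = (\<lambda>i. a + m * i) ` {..<k}"
  proof (intro set_eqI iffI)
    fix n assume "n \<in> {n. n < m * k \<and> n mod m = a}"
    then have "n = a + m * (n div m)" "n div m < k"
      by (auto simp: mult.commute less_mult_imp_div_less)
    then show "n \<in> (\<lambda>i. a + m * i) ` {..<k}" by blast
  next
    fix n assume "n \<in> (\<lambda>i. a + m * i) ` {..<k}"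
    then obtain i where "i < k" "n = a + m * i" by auto
    moreover have "a + m * i < m * Suc i" using assms by simp
    moreover have "m * Suc i \<le> m * k" using \<open>i < k\<close> by (intro mult_le_mono2) simp
    ultimately show "n \<in> {n. n < m * k \<and> n mod m = a}" using assms by simp
  qed
  moreover have "inj_on (\<lambda>i. a + m * i) {..<k}"
    using assms by (intro inj_onI) simp
  ultimately show ?thesis by (simp add: card_image)
qed

lemma card_residue_class_bounds:
  assumes "a < (m::nat)"
  shows "N div m \<le> card {n. n < N \<and> n mod m = a}" "card {n. n < N \<and> n mod m = a} \<le> Suc (N div m)"
proof -
  have "{n. n < m * (N div m) \<and> n mod m = a} \<subseteq> {n. n < N \<and> n mod m = a}"
    by (auto intro: less_le_trans[OF _ times_div_less_eq_dividend])
  then have "card {n. n < m * (N div m) \<and> n mod m = a} \<le> card {n. n < N \<and> n mod m = a}"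
    by (intro card_mono) auto
  then show "N div m \<le> card {n. n < N \<and> n mod m = a}"
    by (simp add: card_residue_class_lessThan_mult[OF assms])
  have "{n. n < N \<and> n mod m = a} \<subseteq> {n. n < m * Suc (N div m) \<and> n mod m = a}"
    using assms dividend_less_times_div[of m N] by auto
  then have "card {n. n < N \<and> n mod m = a} \<le> card {n. n < m * Suc (N div m) \<and> n mod m = a}"
    by (intro card_mono) auto
  then show "card {n. n < N \<and> n mod m = a} \<le> Suc (N div m)"
    using card_residue_class_lessThan_mult[OF assms, of "Suc (N div m)"] by simp
qed

lemma has_density_residue_class:
  assumes "a < (m::nat)"
  shows "has_density {n. n mod m = a} (1 / real m)"
proof -
  define c where "c N = real (card {n. n < N \<and> n mod m = a})" for N
  have m: "real m > 0" using assms by simp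
  have bounds: "real N < real m * c N + real m" "real m * c N \<le> real N + real m" for N
  proof -
    define k where "k = card {n. n < N \<and> n mod m = a}"
    have "N div m \<le> k" "k \<le> Suc (N div m)"
      using card_residue_class_bounds[OF assms, of N] by (simp_all add: k_def)
    then have "m * (N div m) \<le> m * k" "m * k \<le> m * (N div m) + m"
      using mult_le_mono2[of k "Suc (N div m)" m] by simp_all
    moreover have "N < m * (N div m) + m" "m * (N div m) \<le> N"
      using assms dividend_less_times_div[of m N] by simp_all
    ultimately have "N < m * k + m" "m * k \<le> N + m"
      by linarith+
    then show "real N < real m * c N + real m" "real m * c N \<le> real N + real m"
      unfolding c_def k_def by (metis of_nat_add of_nat_less_iff of_nat_mult,
          metis of_nat_add of_nat_le_iff of_nat_mult)
  qed
  have "real N / real m - 1 \<le> c N" "c N \<le> real N / real m + 1" for N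
    using m less_imp_le[OF bounds(1)[of N]] bounds(2)[of N] by (simp_all add: field_simps)
  then have "1 / real m - 1 / real N \<le> c N / real N" "c N / real N \<le> 1 / real m + 1 / real N"
    if "N > 0" for N
    using divide_right_mono[of "real N / real m - 1" "c N" "real N"]
      divide_right_mono[of "c N" "real N / real m + 1" "real N"] that
    by (simp_all add: diff_divide_distrib add_divide_distrib)
  then have "\<forall>\<^sub>F N in sequentially. 1 / real m - 1 / real N \<le> c N / real N"
    "\<forall>\<^sub>F N in sequentially. c N / real N \<le> 1 / real m + 1 / real N"
    by (auto intro: eventually_sequentiallyI[of 1])
  moreover have "(\<lambda>N. 1 / real m - 1 / real N) \<longlonglongrightarrow> 1 / real m"
    "(\<lambda>N. 1 / real m + 1 / real N) \<longlonglongrightarrow> 1 / real m"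
    using tendsto_diff[OF tendsto_const lim_1_over_n] tendsto_add[OF tendsto_const lim_1_over_n]
    by simp_all
  ultimately show ?thesis
    unfolding has_density_def c_def by (auto intro: tendsto_sandwich)
qed

section \<open>The geometric distribution of carries\<close>

definition geom_pmf :: "nat \<Rightarrow> nat \<Rightarrow> real" where
  "geom_pmf b j = (1 - 1 / real b) / real b ^ j"

lemma mod_mult_eq_iff:
  assumes "t < m" "a < (M::nat)"
  shows "n mod m = t \<and> n div m mod M = a \<longleftrightarrow> n mod (m * M) = t + m * a"
proof
  assume h: "n mod (m * M) = t + m * a"
  have "n mod m = n mod (m * M) mod m"
    by (simp add: mod_mod_cancel)
  then have "n mod m = t"
    using h assms(1) by simp
  moreover have "m * (n div m mod M) + n mod m = t + m * a"
    using h by (simp add: mod_mult2_eq)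
  ultimately show "n mod m = t \<and> n div m mod M = a"
    using assms(1) by simp
qed (simp add: mod_mult2_eq)

lemma has_density_carry_count_ge:
  assumes "b \<ge> 2" "t < m"
  shows "has_density {n. n mod m = t \<and> j \<le> carry_count b (n div m)} (1 / (real m * real b ^ j))"
proof -
  have "b ^ j > 0" using assms(1) by simp
  have "j \<le> carry_count b q \<longleftrightarrow> q mod b ^ j = b ^ j - 1" for q
    using power_dvd_Suc_iff_le_carry_count[OF assms(1)] dvd_Suc_iff_mod_eq[OF \<open>b ^ j > 0\<close>]
    by simp
  then have "{n. n mod m = t \<and> j \<le> carry_count b (n div m)} = {n. n mod (m * b ^ j) = t + m * (b ^ j - 1)}"
    using mod_mult_eq_iff[OF assms(2), of "b ^ j - 1" "b ^ j"] \<open>b ^ j > 0\<close> by auto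
  moreover have "m * (b ^ j - 1) + m = m * b ^ j"
    using \<open>b ^ j > 0\<close> by (metis Suc_diff_1 add.commute mult_Suc_right)
  then have "t + m * (b ^ j - 1) < m * b ^ j"
    using assms(2) by linarith
  ultimately show ?thesis
    using has_density_residue_class[OF \<open>t + m * (b ^ j - 1) < m * b ^ j\<close>] by simp
qed

lemma has_density_carry_count_eq:
  assumes "b \<ge> 2" "t < m"
  shows "has_density {n. n mod m = t \<and> carry_count b (n div m) = j} (geom_pmf b j / real m)"
proof -
  have "{n. n mod m = t \<and> carry_count b (n div m) = j}
      = {n. n mod m = t \<and> j \<le> carry_count b (n div m)} - {n. n mod m = t \<and> Suc j \<le> carry_count b (n div m)}"
    by auto
  moreover have "has_density ({n. n mod m = t \<and> j \<le> carry_count b (n div m)}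
      - {n. n mod m = t \<and> Suc j \<le> carry_count b (n div m)})
      (1 / (real m * real b ^ j) - 1 / (real m * real b ^ Suc j))"
    by (intro has_density_Diff has_density_carry_count_ge assms) auto
  moreover have "1 / (real m * real b ^ j) - 1 / (real m * real b ^ Suc j) = geom_pmf b j / real m"
    using assms by (simp add: geom_pmf_def field_simps)
  ultimately show ?thesis
    by simp
qed

lemma sums_of_nat_mult_power:
  fixes x :: real
  assumes "0 < x" "x < 1"
  shows "(\<lambda>j. real j * x ^ j) sums (x / (1 - x)\<^sup>2)"
proof -
  have "(\<lambda>j. x * (real (Suc j) * x ^ j)) sums (x * (1 / (1 - x)\<^sup>2))"
    using geometric_deriv_sums[of x] assms by (intro sums_mult) simp
  then have "(\<lambda>j. real (Suc j) * x ^ Suc j) sums (x / (1 - x)\<^sup>2)"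
    by (simp add: algebra_simps)
  then show ?thesis
    by (subst (asm) sums_Suc_iff) simp
qed

lemma summable_of_nat_power2_mult_power:
  fixes x :: real
  assumes "0 < x" "x < 1"
  shows "summable (\<lambda>j. real j ^ 2 * x ^ j)"
proof (rule summable_comparison_test)
  have "summable (\<lambda>j. diffs (\<lambda>_. 1) j * y ^ j)" if "norm y < 1" for y :: real
    using that by (intro termdiff_converges[of _ 1]) (simp_all add: summable_geometric)
  then have "summable (\<lambda>j. diffs (diffs (\<lambda>_. 1)) j * x ^ j)"
    using assms by (intro termdiff_converges[of _ 1]) auto
  then show "summable (\<lambda>j. real (Suc j) * real (Suc (Suc j)) * x ^ j)"
    by (simp add: diffs_def algebra_simps)
  have "real j ^ 2 \<le> real (Suc j) * real (Suc (Suc j))" for j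
    by (simp add: power2_eq_square algebra_simps)
  then show "\<exists>N. \<forall>j\<ge>N. norm (real j ^ 2 * x ^ j) \<le> real (Suc j) * real (Suc (Suc j)) * x ^ j"
    using assms by (auto intro!: mult_right_mono)
qed

lemma sums_of_nat_power2_mult_power:
  fixes x :: real
  assumes "0 < x" "x < 1"
  shows "(\<lambda>j. real j ^ 2 * x ^ j) sums (x * (1 + x) / (1 - x) ^ 3)"
proof -
  have common_denominator: "x * (2 * (x / y\<^sup>2) + 1 / y) / y = x * (2 * x + y) / y ^ 3" if "y \<noteq> 0" for y
    using that by (simp add: field_simps power2_eq_square power3_eq_cube)
  define S where "S = (\<Sum>j. real j ^ 2 * x ^ j)"
  have S: "(\<lambda>j. real j ^ 2 * x ^ j) sums S"
    unfolding S_def using summable_of_nat_power2_mult_power[OF assms] by (rule summable_sums)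
  \<comment> \<open>Shifting the index by one expresses \<open>S\<close> through itself and the lower moments.\<close>
  have "(\<lambda>j. x * (real j ^ 2 * x ^ j + 2 * (real j * x ^ j) + x ^ j))
      sums (x * (S + 2 * (x / (1 - x)\<^sup>2) + 1 / (1 - x)))"
    using assms by (intro sums_mult sums_add S sums_of_nat_mult_power geometric_sums) auto
  moreover have "(\<lambda>j. x * (real j ^ 2 * x ^ j + 2 * (real j * x ^ j) + x ^ j))
      = (\<lambda>j. real (Suc j) ^ 2 * x ^ Suc j)"
    by (simp add: power2_eq_square algebra_simps)
  moreover have "(\<lambda>j. real (Suc j) ^ 2 * x ^ Suc j) sums S"
    using S by (subst sums_Suc_iff) simp
  ultimately have "S = x * (S + 2 * (x / (1 - x)\<^sup>2) + 1 / (1 - x))"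
    using sums_unique2 by metis
  then have "S * (1 - x) = x * (2 * (x / (1 - x)\<^sup>2) + 1 / (1 - x))"
    by (simp add: algebra_simps)
  then have "S = x * (2 * (x / (1 - x)\<^sup>2) + 1 / (1 - x)) / (1 - x)"
    using assms by (simp add: eq_divide_eq)
  also have "\<dots> = x * (2 * x + (1 - x)) / (1 - x) ^ 3"
    using assms common_denominator[of "1 - x"] by simp
  finally show ?thesis
    using S by (simp add: add.commute)
qed

lemma geom_pmf_eq: "b > 0 \<Longrightarrow> geom_pmf b j = (1 - 1 / real b) * (1 / real b) ^ j"
  by (simp add: geom_pmf_def power_one_over)

lemma has_sum_geom_pmf:
  assumes "b \<ge> 2"
  shows "(geom_pmf b has_sum 1) UNIV"
    and "((\<lambda>j. real j * geom_pmf b j) has_sum (1 / (real b - 1))) UNIV"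
    and "((\<lambda>j. real j ^ 2 * geom_pmf b j) has_sum ((real b + 1) / (real b - 1)\<^sup>2)) UNIV"
proof -
  define x where "x = 1 / real b"
  have x: "0 < x" "x < 1"
    using assms by (auto simp: x_def)
  have p: "geom_pmf b j = (1 - x) * x ^ j" for j
    using assms by (simp add: geom_pmf_eq x_def)
  define z where "z = real b - 1"
  have z: "z > 0" "z + 1 \<noteq> 0"
    using assms by (simp_all add: z_def)
  have xz: "x = 1 / (z + 1)"
    by (simp add: x_def z_def)
  have "x / (1 - x) = 1 / z" "x * (1 + x) / (1 - x)\<^sup>2 = (z + 2) / z\<^sup>2"
    unfolding xz using z by (simp_all add: divide_simps power2_eq_square)
  then have mean: "x / (1 - x) = 1 / (real b - 1)"
    and second: "x * (1 + x) / (1 - x)\<^sup>2 = (real b + 1) / (real b - 1)\<^sup>2"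
    by (simp_all add: z_def)
  have moment: "((\<lambda>j. real j ^ k * geom_pmf b j) has_sum ((1 - x) * s)) UNIV"
    if "(\<lambda>j. real j ^ k * x ^ j) sums s" for k s
  proof -
    have "(\<lambda>j. (1 - x) * (real j ^ k * x ^ j)) sums ((1 - x) * s)"
      using that by (rule sums_mult)
    then have "((\<lambda>j. (1 - x) * (real j ^ k * x ^ j)) has_sum ((1 - x) * s)) UNIV"
      using x by (intro sums_nonneg_imp_has_sum) simp_all
    then show ?thesis
      by (simp add: p ac_simps)
  qed
  show "(geom_pmf b has_sum 1) UNIV"
    using moment[of 0 "1 / (1 - x)"] geometric_sums[of x] x by simp
  show "((\<lambda>j. real j * geom_pmf b j) has_sum (1 / (real b - 1))) UNIV"
    using moment[of 1 "x / (1 - x)\<^sup>2"] sums_of_nat_mult_power[OF x] x mean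
    by (simp add: power2_eq_square)
  show "((\<lambda>j. real j ^ 2 * geom_pmf b j) has_sum ((real b + 1) / (real b - 1)\<^sup>2)) UNIV"
    using moment[of 2 "x * (1 + x) / (1 - x) ^ 3"] sums_of_nat_power2_mult_power[OF x] x second
    by (simp add: power2_eq_square power3_eq_cube)
qed

(* The law of (b - 1) J for J geometric with ratio 1 / b, which is the law of
   (b - 1) carry_count b (n div m) on a residue class modulo m. *)
definition carry_pmf :: "nat \<Rightarrow> int \<Rightarrow> real" where
  "carry_pmf b z = (if 0 \<le> z \<and> int (b - 1) dvd z then geom_pmf b (nat (z div int (b - 1))) else 0)"

lemma has_density_scaled_carry_count:
  assumes b: "b \<ge> 2" and t: "t < m"
  shows "has_density {n. n mod m = t \<and> int (b - 1) * int (carry_count b (n div m)) = z} (carry_pmf b z / real m)"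
proof (cases "0 \<le> z \<and> int (b - 1) dvd z")
  case True
  then obtain k where k: "z = int (b - 1) * k"
    by (auto elim: dvdE)
  moreover have "int (b - 1) > 0"
    using b by simp
  ultimately have "k \<ge> 0"
    using True by (simp add: zero_le_mult_iff)
  then obtain j where j: "z = int (b - 1) * int j"
    using k nonneg_int_cases by metis
  then have "{n. n mod m = t \<and> int (b - 1) * int (carry_count b (n div m)) = z}
      = {n. n mod m = t \<and> carry_count b (n div m) = j}"
    using b by auto
  moreover have "carry_pmf b z = geom_pmf b j"
    using b j by (simp add: carry_pmf_def)
  ultimately show ?thesis
    using has_density_carry_count_eq[OF b t] by simp
next
  case False
  then have "int (b - 1) * int q \<noteq> z" for q
    by (metis dvd_triv_left of_nat_0_le_iff zero_le_mult_iff)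
  then have "{n. n mod m = t \<and> int (b - 1) * int (carry_count b (n div m)) = z} = {}"
    by auto
  moreover have "carry_pmf b z = 0"
    using False unfolding carry_pmf_def by argo
  ultimately show ?thesis
    using has_density_empty by (simp only: div_0)
qed

lemma has_sum_carry_pmf_reindex:
  assumes "b \<ge> 2" and "((\<lambda>j. F (c - int (b - 1) * int j) * geom_pmf b j) has_sum s) UNIV"
  shows "((\<lambda>d. F d * carry_pmf b (c - d)) has_sum s) UNIV"
proof -
  let ?h = "\<lambda>j. c - int (b - 1) * int j"
  have "inj ?h"
    using assms(1) by (intro injI) simp
  moreover have "carry_pmf b (c - ?h j) = geom_pmf b j" for j
    using assms(1) by (simp add: carry_pmf_def)
  ultimately have "((\<lambda>d. F d * carry_pmf b (c - d)) has_sum s) (range ?h)"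
    using has_sum_reindex[of ?h UNIV "\<lambda>d. F d * carry_pmf b (c - d)" s] assms(2)
    by (simp add: comp_def)
  moreover have "carry_pmf b (c - d) = 0" if "d \<notin> range ?h" for d
  proof (rule ccontr)
    assume "carry_pmf b (c - d) \<noteq> 0"
    then obtain k where "c - d = int (b - 1) * k" "0 \<le> c - d"
      by (auto simp: carry_pmf_def split: if_splits elim: dvdE)
    moreover have "int (b - 1) > 0"
      using assms(1) by simp
    ultimately have "d = ?h (nat k)"
      by (simp add: zero_le_mult_iff)
    then show False
      using that by blast
  qed
  ultimately show ?thesis
    by (subst has_sum_cong_neutral[where T = "range ?h"]) auto
qed

lemma has_sum_carry_pmf_mean:
  assumes "b \<ge> 2"
  shows "((\<lambda>d. real_of_int d * carry_pmf b (c - d)) has_sum (real_of_int c - 1)) UNIV"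
proof (rule has_sum_carry_pmf_reindex[OF assms])
  have "((\<lambda>j. real_of_int c * geom_pmf b j + (1 - real b) * (real j * geom_pmf b j)) has_sum
      (real_of_int c * 1 + (1 - real b) * (1 / (real b - 1)))) UNIV"
    using has_sum_geom_pmf[OF assms] by (intro has_sum_add has_sum_cmult_right)
  moreover have "real_of_int c * 1 + (1 - real b) * (1 / (real b - 1)) = real_of_int c - 1"
    using assms by (simp add: field_simps)
  moreover have "real_of_int (c - int (b - 1) * int j) * geom_pmf b j
      = real_of_int c * geom_pmf b j + (1 - real b) * (real j * geom_pmf b j)" for j
    using assms by (simp add: of_nat_diff algebra_simps)
  ultimately show "((\<lambda>j. real_of_int (c - int (b - 1) * int j) * geom_pmf b j) has_sum (real_of_int c - 1)) UNIV"
    by (simp only:)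
qed

lemma has_sum_carry_pmf_second_moment:
  assumes "b \<ge> 2"
  shows "((\<lambda>d. (real_of_int d)\<^sup>2 * carry_pmf b (c - d)) has_sum ((real_of_int c - 1)\<^sup>2 + real b)) UNIV"
proof (rule has_sum_carry_pmf_reindex[OF assms])
  have "((\<lambda>j. (real_of_int c)\<^sup>2 * geom_pmf b j + 2 * real_of_int c * (1 - real b) * (real j * geom_pmf b j)
        + (real b - 1)\<^sup>2 * (real j ^ 2 * geom_pmf b j)) has_sum
      ((real_of_int c)\<^sup>2 * 1 + 2 * real_of_int c * (1 - real b) * (1 / (real b - 1))
        + (real b - 1)\<^sup>2 * ((real b + 1) / (real b - 1)\<^sup>2))) UNIV"
    using has_sum_geom_pmf[OF assms] by (intro has_sum_add has_sum_cmult_right)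
  moreover have "(real_of_int c)\<^sup>2 * 1 + 2 * real_of_int c * (1 - real b) * (1 / (real b - 1))
        + (real b - 1)\<^sup>2 * ((real b + 1) / (real b - 1)\<^sup>2) = (real_of_int c - 1)\<^sup>2 + real b"
  proof -
    have "real b - 1 \<noteq> 0"
      using assms by simp
    then have "2 * real_of_int c * (1 - real b) * (1 / (real b - 1)) = - 2 * real_of_int c"
      "(real b - 1)\<^sup>2 * ((real b + 1) / (real b - 1)\<^sup>2) = real b + 1"
      by (simp_all add: field_simps)
    then show ?thesis
      by (simp add: power2_eq_square algebra_simps)
  qed
  moreover have "(real_of_int (c - int (b - 1) * int j))\<^sup>2 * geom_pmf b j
      = (real_of_int c)\<^sup>2 * geom_pmf b j + 2 * real_of_int c * (1 - real b) * (real j * geom_pmf b j)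
        + (real b - 1)\<^sup>2 * (real j ^ 2 * geom_pmf b j)" for j
    using assms by (simp add: of_nat_diff power2_eq_square algebra_simps)
  ultimately show "((\<lambda>j. (real_of_int (c - int (b - 1) * int j))\<^sup>2 * geom_pmf b j) has_sum
      ((real_of_int c - 1)\<^sup>2 + real b)) UNIV"
    by (simp only:)
qed

section \<open>The distribution of Delta as a mixture over residue classes\<close>

(* The law of Delta b r on the residue class t modulo m. *)
definition class_pmf :: "nat \<Rightarrow> nat \<Rightarrow> nat \<Rightarrow> nat \<Rightarrow> int \<Rightarrow> real" where
  "class_pmf b r m t d = (if t + r < m then of_bool (Delta_low b r m t = d)
     else carry_pmf b (Delta_low b r m t + 1 - d))"

lemma has_density_Delta_residue_class:
  assumes b: "b \<ge> 2" and r: "r < b ^ K" and t: "t < b ^ K"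
  shows "has_density {n \<in> {n. Delta b r n = d}. n mod b ^ K = t} (class_pmf b r (b ^ K) t d / real (b ^ K))"
proof -
  let ?m = "b ^ K"
  let ?Y = "Delta_low b r ?m t"
  have Delta: "Delta b r n = ?Y + (if ?m \<le> t + r then 1 - int (b - 1) * int (carry_count b (n div ?m)) else 0)"
    if "n mod ?m = t" for n
    using Delta_eq_Delta_low_carry[OF b r, of n] that by simp
  show ?thesis
  proof (cases "t + r < ?m")
    case True
    then have "{n \<in> {n. Delta b r n = d}. n mod ?m = t} = (if ?Y = d then {n. n mod ?m = t} else {})"
      using Delta by auto
    then show ?thesis
      using True has_density_residue_class[OF t] has_density_empty by (simp add: class_pmf_def)
  next
    case False
    let ?z = "?Y + 1 - d"
    have iff: "Delta b r n = d \<longleftrightarrow> int (b - 1) * int (carry_count b (n div ?m)) = ?z"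
      if "n mod ?m = t" for n
      using Delta[OF that] False by auto
    then have "{n \<in> {n. Delta b r n = d}. n mod ?m = t}
        = {n. n mod ?m = t \<and> int (b - 1) * int (carry_count b (n div ?m)) = ?z}"
      by auto
    then show ?thesis
      using False has_density_scaled_carry_count[OF b t, of ?z] by (simp add: class_pmf_def)
  qed
qed

lemma mu_eq_class_average:
  assumes "b \<ge> 2" "r < b ^ K"
  shows "mu b r d = (\<Sum>t<b ^ K. class_pmf b r (b ^ K) t d) / real (b ^ K)"
  using has_density_residue_partition[of "b ^ K" "{n. Delta b r n = d}"]
    has_density_Delta_residue_class[OF assms] assms(1)
  by (auto intro!: mu_eqI simp: sum_divide_distrib)

lemma has_sum_mult_of_bool_eq: "((\<lambda>d. f d * of_bool (y = d)) has_sum (f y :: real)) UNIV"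
  by (rule has_sum_finite_neutralI[of "{y}"]) auto

lemma has_sum_class_pmf_mean:
  assumes "b \<ge> 2"
  shows "((\<lambda>d. real_of_int d * class_pmf b r m t d) has_sum real_of_int (Delta_low b r m t)) UNIV"
  using has_sum_carry_pmf_mean[OF assms, of "Delta_low b r m t + 1"]
    has_sum_mult_of_bool_eq[of real_of_int "Delta_low b r m t"]
  by (cases "t + r < m") (simp_all add: class_pmf_def)

lemma has_sum_class_pmf_second_moment:
  assumes "b \<ge> 2"
  shows "((\<lambda>d. (real_of_int d)\<^sup>2 * class_pmf b r m t d) has_sum
     ((real_of_int (Delta_low b r m t))\<^sup>2 + (if t + r < m then 0 else real b))) UNIV"
  using has_sum_carry_pmf_second_moment[OF assms, of "Delta_low b r m t + 1"]
    has_sum_mult_of_bool_eq[of "\<lambda>d. (real_of_int d)\<^sup>2" "Delta_low b r m t"]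
  by (cases "t + r < m") (simp_all add: class_pmf_def)

section \<open>Sums over residue classes\<close>

definition digit_shift :: "nat \<Rightarrow> nat \<Rightarrow> nat \<Rightarrow> nat \<Rightarrow> nat" where
  "digit_shift b r K t = digit b r K + (t + r mod b ^ K) div b ^ K"

lemma carry_le_1:
  fixes b t K r :: nat
  assumes "b > 0" "t < b ^ K"
  shows "(t + r mod b ^ K) div b ^ K \<le> 1"
proof -
  have "r mod b ^ K < b ^ K"
    using assms(1) by simp
  then have "t + r mod b ^ K < b ^ K * 2"
    using assms(2) by linarith
  then have "(t + r mod b ^ K) div b ^ K < 2"
    by (intro less_mult_imp_div_less) (simp add: mult.commute)
  then show ?thesis
    by simp
qed

lemma digit_shift_le:
  assumes "b > 0" "t < b ^ K"
  shows "digit_shift b r K t \<le> b"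
  using carry_le_1[OF assms, of r] mod_less_divisor[OF assms(1), of "r div b ^ K"]
  by (simp add: digit_shift_def digit_def)

lemma add_mod_power_Suc:
  assumes "b > 0" "t < b ^ K"
  shows "(t + b ^ K * a + r) mod b ^ Suc K = (t + r) mod b ^ K + b ^ K * ((a + digit_shift b r K t) mod b)"
proof -
  define M where "M = b ^ K"
  have "M > 0" using assms(1) by (simp add: M_def)
  have "t + M * a + r = (t + r mod M) + M * (a + r div M)"
    by (simp add: algebra_simps)
  then have "(t + M * a + r) div M = a + r div M + (t + r mod M) div M"
    using \<open>M > 0\<close> by (simp only: div_mult_self2)
  then have "(t + M * a + r) div M mod b = (r div M mod b + (a + (t + r mod M) div M)) mod b"
    using mod_add_left_eq[of "r div M" b "a + (t + r mod M) div M"] by (simp add: ac_simps)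
  then have "(t + M * a + r) div M mod b = (a + digit_shift b r K t) mod b"
    by (simp add: digit_shift_def digit_def M_def ac_simps)
  moreover have "(t + M * a + r) mod M = (t + r) mod M"
    using mod_mult_self2[of "t + r" M a] by (simp add: ac_simps)
  ultimately show ?thesis
    using mod_mult2_eq[of "t + M * a + r" M b] by (simp add: M_def mult.commute)
qed

lemma Delta_low_power_Suc:
  assumes "b \<ge> 2" "t < b ^ K" "a < b"
  shows "Delta_low b r (b ^ Suc K) (t + b ^ K * a)
    = Delta_low b r (b ^ K) t + (int ((a + digit_shift b r K t) mod b) - int a)"
proof -
  have "digsum b ((t + b ^ K * a + r) mod b ^ Suc K)
      = digsum b ((t + r) mod b ^ K) + int ((a + digit_shift b r K t) mod b)"
    using assms(1) add_mod_power_Suc[of b t K a r] assms(2)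
      digsum_add_mult_power[OF assms(1), of "(t + r) mod b ^ K" K] digsum_less_base[OF assms(1)]
    by simp
  moreover have "digsum b (t + b ^ K * a) = digsum b t + int a"
    using digsum_add_mult_power[OF assms(1,2)] digsum_less_base[OF assms(1,3)] by simp
  ultimately show ?thesis
    by (simp add: Delta_low_def add.commute add.left_commute)
qed

lemma sum_lessThan_power_Suc:
  fixes f :: "nat \<Rightarrow> 'a::comm_monoid_add"
  shows "(\<Sum>t<b ^ Suc K. f t) = (\<Sum>t<b ^ K. \<Sum>a<b. f (t + b ^ K * a))"
proof -
  have "(\<Sum>t<b ^ Suc K. f t) = (\<Sum>a<b. \<Sum>t\<in>{a * b ^ K..<a * b ^ K + b ^ K}. f t)"
    using sum.nat_group[of f "b ^ K" b] by (simp add: mult.commute)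
  also have "\<dots> = (\<Sum>a<b. \<Sum>t<b ^ K. f (t + b ^ K * a))"
  proof (rule sum.cong [OF refl])
    fix a
    show "(\<Sum>t\<in>{a * b ^ K..<a * b ^ K + b ^ K}. f t) = (\<Sum>t<b ^ K. f (t + b ^ K * a))"
      using sum.shift_bounds_nat_ivl[of f 0 "a * b ^ K" "b ^ K"]
      by (simp add: add.commute mult.commute atLeast0LessThan)
  qed
  finally show ?thesis
    by (subst (asm) sum.swap)
qed

lemma sum_mod_shift:
  fixes b w :: nat
  assumes "w \<le> b"
  shows "(\<Sum>a<b. int ((a + w) mod b) - int a) = 0"
    and "(\<Sum>a<b. (int ((a + w) mod b) - int a)\<^sup>2) = int w * (int b - int w) * int b"
proof -
  have split: "(\<Sum>a<b. g a) = (\<Sum>a<b - w. g a) + (\<Sum>a\<in>{b - w..<b}. g a)" for g :: "nat \<Rightarrow> int"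
    using sum.atLeastLessThan_concat[of 0 "b - w" b g] by (simp add: atLeast0LessThan)
  have low: "int ((a + w) mod b) - int a = int w" if "a < b - w" for a
    using that by simp
  have high: "int ((a + w) mod b) - int a = int w - int b" if "a \<in> {b - w..<b}" for a
  proof -
    have "b \<le> a + w" "a + w - b < b"
      using that assms by auto
    then have "(a + w) mod b = a + w - b"
      by (simp add: le_mod_geq)
    then show ?thesis
      using that by auto
  qed
  have "(\<Sum>a<b. h (int ((a + w) mod b) - int a)) = int (b - w) * h (int w) + int w * h (int w - int b)"
    for h :: "int \<Rightarrow> int"
    using split[of "\<lambda>a. h (int ((a + w) mod b) - int a)"] assms by (simp add: low high)
  from this[of id] this[of "\<lambda>x. x\<^sup>2"] assms
  show "(\<Sum>a<b. int ((a + w) mod b) - int a) = 0"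
    and "(\<Sum>a<b. (int ((a + w) mod b) - int a)\<^sup>2) = int w * (int b - int w) * int b"
    by (simp_all add: of_nat_diff power2_eq_square algebra_simps)
qed

definition low_variance :: "nat \<Rightarrow> nat \<Rightarrow> nat \<Rightarrow> real" where
  "low_variance b r K = (\<Sum>t<b ^ K. (real_of_int (Delta_low b r (b ^ K) t))\<^sup>2) / real (b ^ K)"

definition variance_increment :: "nat \<Rightarrow> nat \<Rightarrow> nat \<Rightarrow> real" where
  "variance_increment b r K =
     (\<Sum>t<b ^ K. real (digit_shift b r K t) * (real b - real (digit_shift b r K t))) / real (b ^ K)"

lemma sum_Delta_low_power_Suc:
  assumes "b \<ge> 2"
  shows "(\<Sum>t<b ^ Suc K. Delta_low b r (b ^ Suc K) t) = int b * (\<Sum>t<b ^ K. Delta_low b r (b ^ K) t)"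
    and "(\<Sum>t<b ^ Suc K. (Delta_low b r (b ^ Suc K) t)\<^sup>2) = int b * (\<Sum>t<b ^ K. (Delta_low b r (b ^ K) t)\<^sup>2)
       + int b * (\<Sum>t<b ^ K. int (digit_shift b r K t) * (int b - int (digit_shift b r K t)))"
proof -
  let ?Y = "\<lambda>t. Delta_low b r (b ^ K) t"
  let ?D = "\<lambda>t a. int ((a + digit_shift b r K t) mod b) - int a"
  have shift: "(\<Sum>a<b. ?D t a) = 0"
    and shift_sq: "(\<Sum>a<b. (?D t a)\<^sup>2) = int (digit_shift b r K t) * (int b - int (digit_shift b r K t)) * int b"
    if "t < b ^ K" for t
    using sum_mod_shift[OF digit_shift_le[of b t K r]] that assms by simp_all
  have split: "(\<Sum>t<b ^ Suc K. f (Delta_low b r (b ^ Suc K) t)) = (\<Sum>t<b ^ K. \<Sum>a<b. f (?Y t + ?D t a))"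
    for f :: "int \<Rightarrow> int"
    unfolding sum_lessThan_power_Suc[of _ b K]
    by (intro sum.cong refl arg_cong[where f = f] Delta_low_power_Suc[OF assms]) simp_all
  have "(\<Sum>a<b. ?Y t + ?D t a) = int b * ?Y t" if "t < b ^ K" for t
    using shift[OF that] by (simp add: sum.distrib)
  then show "(\<Sum>t<b ^ Suc K. Delta_low b r (b ^ Suc K) t) = int b * (\<Sum>t<b ^ K. ?Y t)"
    using split[of id] by (simp add: sum_distrib_left)
  have "(\<Sum>a<b. (?Y t + ?D t a)\<^sup>2)
      = int b * (?Y t)\<^sup>2 + int b * (int (digit_shift b r K t) * (int b - int (digit_shift b r K t)))"
    if "t < b ^ K" for t
  proof -
    have "(\<Sum>a<b. (?Y t + ?D t a)\<^sup>2) = int b * (?Y t)\<^sup>2 + 2 * ?Y t * (\<Sum>a<b. ?D t a) + (\<Sum>a<b. (?D t a)\<^sup>2)"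
      by (simp add: power2_sum sum.distrib sum_distrib_left)
    then show ?thesis
      using shift[OF that] shift_sq[OF that] by simp
  qed
  then show "(\<Sum>t<b ^ Suc K. (Delta_low b r (b ^ Suc K) t)\<^sup>2) = int b * (\<Sum>t<b ^ K. (?Y t)\<^sup>2)
       + int b * (\<Sum>t<b ^ K. int (digit_shift b r K t) * (int b - int (digit_shift b r K t)))"
    using split[of "\<lambda>x. x\<^sup>2"] by (simp add: sum_distrib_left sum.distrib)
qed

lemma sum_Delta_low_eq_0:
  assumes "b \<ge> 2"
  shows "(\<Sum>t<b ^ K. Delta_low b r (b ^ K) t) = 0"
proof (induction K)
  case 0
  then show ?case by (simp add: Delta_low_def)
next
  case (Suc K)
  then show ?case
    using sum_Delta_low_power_Suc(1)[OF assms, where K = K and r = r] by simp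
qed

lemma low_variance_0: "low_variance b r 0 = 0"
  by (simp add: low_variance_def Delta_low_def)

lemma low_variance_Suc:
  assumes "b \<ge> 2"
  shows "low_variance b r (Suc K) = low_variance b r K + variance_increment b r K"
proof -
  have "real b > 0"
    using assms by simp
  moreover have "(\<Sum>t<b ^ Suc K. (real_of_int (Delta_low b r (b ^ Suc K) t))\<^sup>2)
      = real b * (\<Sum>t<b ^ K. (real_of_int (Delta_low b r (b ^ K) t))\<^sup>2)
      + real b * (\<Sum>t<b ^ K. real (digit_shift b r K t) * (real b - real (digit_shift b r K t)))"
    using arg_cong[OF sum_Delta_low_power_Suc(2)[OF assms, where K = K and r = r], of real_of_int]
    by (simp add: of_nat_diff)
  ultimately show ?thesis
    by (simp add: low_variance_def variance_increment_def field_simps)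
qed

lemma has_sum_sum:
  fixes f :: "'i \<Rightarrow> 'a \<Rightarrow> real"
  assumes "finite I" "\<And>i. i \<in> I \<Longrightarrow> (f i has_sum s i) A"
  shows "((\<lambda>x. \<Sum>i\<in>I. f i x) has_sum (\<Sum>i\<in>I. s i)) A"
  using assms
proof (induction I rule: finite_induct)
  case (insert i I)
  then show ?case
    by (simp add: has_sum_add)
qed simp

lemma sum_lessThan_carry_indicator:
  assumes "r \<le> m"
  shows "(\<Sum>t<m. if t + r < m then 0 else c) = real r * (c :: real)"
proof -
  have "{t. t < m \<and> \<not> t + r < m} = {m - r..<m}"
    using assms by auto
  then show ?thesis
    using assms by (simp add: sum.If_cases Int_def)
qed

lemma variance_mu_eq:
  assumes b: "b \<ge> 2" and r: "r < b ^ K"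
  shows "variance_int (mu b r) = low_variance b r K + real b * real r / real (b ^ K)"
proof -
  let ?m = "b ^ K"
  let ?Y = "\<lambda>t. real_of_int (Delta_low b r ?m t)"
  have mu: "mu b r d = (1 / real ?m) * (\<Sum>t<?m. class_pmf b r ?m t d)" for d
    using mu_eq_class_average[OF b r] by simp
  have second: "(\<lambda>d. (real_of_int d)\<^sup>2 * mu b r d)
      = (\<lambda>d. (1 / real ?m) * (\<Sum>t<?m. (real_of_int d)\<^sup>2 * class_pmf b r ?m t d))"
    and first: "(\<lambda>d. real_of_int d * mu b r d)
      = (\<lambda>d. (1 / real ?m) * (\<Sum>t<?m. real_of_int d * class_pmf b r ?m t d))"
    by (simp_all add: mu sum_distrib_left)
  have "((\<lambda>d. (real_of_int d)\<^sup>2 * mu b r d) has_sum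
      ((1 / real ?m) * (\<Sum>t<?m. (?Y t)\<^sup>2 + (if t + r < ?m then 0 else real b)))) UNIV"
    unfolding second by (intro has_sum_cmult_right has_sum_sum has_sum_class_pmf_second_moment b) simp
  moreover have "((\<lambda>d. real_of_int d * mu b r d) has_sum ((1 / real ?m) * (\<Sum>t<?m. ?Y t))) UNIV"
    unfolding first by (intro has_sum_cmult_right has_sum_sum has_sum_class_pmf_mean b) simp
  moreover have "(\<Sum>t<?m. ?Y t) = 0"
    using arg_cong[OF sum_Delta_low_eq_0[OF b, where K = K and r = r], of real_of_int] by simp
  moreover have "(\<Sum>t<?m. (?Y t)\<^sup>2 + (if t + r < ?m then 0 else real b))
      = (\<Sum>t<?m. (?Y t)\<^sup>2) + real r * real b"
    using r by (simp only: sum.distrib sum_lessThan_carry_indicator less_imp_le)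
  ultimately show ?thesis
    unfolding variance_int_def low_variance_def
    by (simp add: infsumI add_divide_distrib)
qed

lemma variance_increment_nonneg:
  assumes "b > 0"
  shows "0 \<le> variance_increment b r K"
  unfolding variance_increment_def
  using digit_shift_le[OF assms] by (intro divide_nonneg_nonneg sum_nonneg mult_nonneg_nonneg) auto

lemma variance_increment_ge_mid_digit:
  assumes "b \<ge> 2" "digit b r K \<in> {1..b - 2}"
  shows "real b - 1 \<le> variance_increment b r K"
proof -
  have "real b - 1 \<le> real (digit_shift b r K t) * (real b - real (digit_shift b r K t))"
    if "t < b ^ K" for t
  proof -
    have "1 \<le> digit_shift b r K t" "digit_shift b r K t \<le> b - 1"
      using carry_le_1[of b t K r] that assms by (auto simp: digit_shift_def)
    then have "0 \<le> (real (digit_shift b r K t) - 1) * (real b - 1 - real (digit_shift b r K t))"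
      using assms(1) by (intro mult_nonneg_nonneg) auto
    then show ?thesis
      by (simp add: algebra_simps)
  qed
  then have "real (b ^ K) * (real b - 1)
      \<le> (\<Sum>t<b ^ K. real (digit_shift b r K t) * (real b - real (digit_shift b r K t)))"
    using sum_mono[of "{..<b ^ K}" "\<lambda>_. real b - 1"] by simp
  then show ?thesis
    using assms(1) by (simp add: variance_increment_def field_simps)
qed

lemma variance_increment_ge_top_digit:
  assumes "b \<ge> 2" "digit b r K = b - 1"
  shows "(real b - 1) * real (b ^ K - r mod b ^ K) / real (b ^ K) \<le> variance_increment b r K"
proof -
  let ?f = "\<lambda>t. real (digit_shift b r K t) * (real b - real (digit_shift b r K t))"
  have "?f t = real b - 1" if "t < b ^ K - r mod b ^ K" for t
    using that assms by (simp add: digit_shift_def of_nat_diff)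
  then have "(\<Sum>t<b ^ K - r mod b ^ K. ?f t) = real (b ^ K - r mod b ^ K) * (real b - 1)"
    by simp
  moreover have "(\<Sum>t<b ^ K - r mod b ^ K. ?f t) \<le> (\<Sum>t<b ^ K. ?f t)"
    using digit_shift_le[of b _ K r] assms(1) by (intro sum_mono2) auto
  ultimately show ?thesis
    unfolding variance_increment_def by (simp add: divide_right_mono mult.commute)
qed

lemma power_Suc_minus_mod_ge:
  assumes "b > 0" "digit b r k = 0"
  shows "(b - 1) * b ^ k \<le> b ^ Suc k - r mod b ^ Suc k"
proof -
  have "r mod b ^ Suc k = r mod b ^ k"
    using assms(2) mod_mult2_eq[of r "b ^ k" b] by (simp add: digit_def mult.commute)
  then have "r mod b ^ Suc k < b ^ k"
    using assms(1) by simp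
  then show ?thesis
    by (simp add: diff_mult_distrib)
qed

lemma variance_increment_ge_block_start:
  assumes b: "b \<ge> 2" and top: "digit b r K = b - 1" and start: "K = 0 \<or> digit b r (K - 1) = 0"
  shows "real b / 4 \<le> variance_increment b r K"
proof -
  have "real b / 4 \<le> (real b - 1) * real (b ^ K - r mod b ^ K) / real (b ^ K)"
  proof (cases K)
    case 0
    then show ?thesis using b by simp
  next
    case (Suc k)
    then have "(b - 1) * b ^ k \<le> b ^ K - r mod b ^ K"
      using start power_Suc_minus_mod_ge[of b r k] b by simp
    then have "(real b - 1) * ((real b - 1) * real b ^ k) \<le> (real b - 1) * real (b ^ K - r mod b ^ K)"
      using b by (intro mult_left_mono) (auto simp: of_nat_diff dest: of_nat_mono[where 'a = real])
    then have "(real b - 1) * ((real b - 1) * real b ^ k) / real (b ^ K)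
        \<le> (real b - 1) * real (b ^ K - r mod b ^ K) / real (b ^ K)"
      by (rule divide_right_mono) simp
    moreover have "(real b - 1) * ((real b - 1) * real b ^ k) / real (b ^ K)
        = (real b - 1) * (real b - 1) / real b"
      using b Suc by (simp add: field_simps)
    moreover have "real b * real b \<le> 4 * ((real b - 1) * (real b - 1))"
      using b mult_mono[of "real b" "2 * real b - 2" "real b" "2 * real b - 2"] by (simp add: algebra_simps)
    then have "real b / 4 \<le> (real b - 1) * (real b - 1) / real b"
      using b by (simp add: field_simps)
    ultimately show ?thesis
      by linarith
  qed
  then show ?thesis
    using variance_increment_ge_top_digit[OF b top] by linarith
qed

definition block_starts :: "nat \<Rightarrow> nat \<Rightarrow> nat set" where
  "block_starts b r = {k. digit b r k \<noteq> 0 \<and> (k = 0 \<or> digit b r k \<noteq> b - 1 \<or> digit b r (k - 1) \<noteq> b - 1)}"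

(* A digit in {1..b-2} yields twice the increment b/4 it needs; the surplus pays for a
   following run of digits b - 1 which is not preceded by a 0, where the increment may be small. *)
lemma variance_increment_step:
  assumes b: "b \<ge> 2"
  shows "real b / 4 * (of_bool (K \<in> block_starts b r) + of_bool (digit b r K \<in> {1..b - 2}))
    \<le> variance_increment b r K + real b / 4 * of_bool (0 < K \<and> digit b r (K - 1) \<in> {1..b - 2})"
proof -
  have digit_less: "digit b r k < b" for k
    using b by (simp add: digit_def)
  have nonneg: "0 \<le> variance_increment b r K"
    using b by (intro variance_increment_nonneg) simp
  consider "digit b r K = 0" | "digit b r K \<in> {1..b - 2}" | "digit b r K = b - 1"
    using digit_less[of K] by fastforce
  then show ?thesis
  proof cases
    case 1
    then show ?thesis
      using nonneg by (simp add: block_starts_def)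
  next
    case 2
    then show ?thesis
      using variance_increment_ge_mid_digit[OF b 2] b by simp
  next
    case 3
    then have not_mid: "digit b r K \<notin> {1..b - 2}"
      using b by auto
    show ?thesis
    proof (cases "K \<in> block_starts b r")
      case False
      then show ?thesis
        using nonneg not_mid by (auto simp: of_bool_def)
    next
      case True
      then have "K = 0 \<or> digit b r (K - 1) = 0 \<or> (0 < K \<and> digit b r (K - 1) \<in> {1..b - 2})"
        using 3 digit_less[of "K - 1"] by (auto simp: block_starts_def)
      then show ?thesis
        using variance_increment_ge_block_start[OF b 3] nonneg not_mid True by auto
    qed
  qed
qed

lemma low_variance_ge_blocks:
  assumes b: "b \<ge> 2"
  shows "real b / 4 * (real (card (block_starts b r \<inter> {..<K})) + of_bool (0 < K \<and> digit b r (K - 1) \<in> {1..b - 2}))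
    \<le> low_variance b r K"
proof (induction K)
  case 0
  then show ?case by (simp add: low_variance_0)
next
  case (Suc K)
  have "card (block_starts b r \<inter> {..<Suc K}) = card (block_starts b r \<inter> {..<K}) + of_bool (K \<in> block_starts b r)"
    by (simp add: lessThan_Suc Int_insert_right)
  then show ?case
    using Suc.IH variance_increment_step[OF b, of K r] by (simp add: low_variance_Suc[OF b] algebra_simps)
qed

lemma block_starts_subset:
  assumes "b \<ge> 2"
  shows "block_starts b r \<subseteq> {..<r}"
proof
  fix k
  assume "k \<in> block_starts b r"
  then have "\<not> r < b ^ k"
    using digit_eq_0_if_less[of r b k] by (auto simp: block_starts_def)
  then show "k \<in> {..<r}"
    using less_power_self[OF assms, of r] power_increasing[of r k b] assms by fastforce
qed

theorem mainTheorem16: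
  fixes b r :: nat
  assumes "b \<ge> 2" and "r \<ge> 1"
  shows "variance_int (mu b r) \<ge> real b / 4 * real (lambda_blocks b r)"
proof -
  have "lambda_blocks b r = card (block_starts b r \<inter> {..<r})"
    using block_starts_subset[OF assms(1)]
    by (simp add: lambda_blocks_def block_starts_def Int_absorb2)
  then have "real b / 4 * real (lambda_blocks b r)
      \<le> real b / 4 * (real (card (block_starts b r \<inter> {..<r})) + of_bool (0 < r \<and> digit b r (r - 1) \<in> {1..b - 2}))"
    by (intro mult_left_mono) auto
  also have "\<dots> \<le> low_variance b r r"
    by (rule low_variance_ge_blocks[OF assms(1)])
  also have "\<dots> \<le> variance_int (mu b r)"
    using variance_mu_eq[OF assms(1) less_power_self[OF assms(1)]] by simp
  finally show ?thesis .
qed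

end
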